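(* Let $x\cdot y$ be a PA-structure on $(\mathfrak{g},\mathfrak{n})$, where $\mathfrak{g}$ is abelian and $\mathfrak{n}$ is a Heisenberg Lie algebra of dimension $n\ge5$. Then $Z(\mathfrak{n})\cdot\mathfrak{n}=\mathfrak{n}\cdot Z(\mathfrak{n})=0$, and $x\circ y=\frac12(x\cdot y+y\cdot x)$ defines a CPA-structure on $\mathfrak{n}$.
   Context: Let $K$ be a field of characteristic zero and $V$ a finite-dimensional vector space over $K$. Let $\mathfrak{g}=(V,[\,,])$ and $\mathfrak{n}=(V,\{\,,\})$ be two Lie algebra structures on $V$. A post-Lie algebra structure (PA-structure) on the pair $(\mathfrak{g},\mathfrak{n})$ is a $K$-bilinear product $x\cdot y$ on $V$ satisfying, for all $x,y,z\in V$: (i) $x\cdot y-y\cdot x=[x,y]-\{x,y\}$; (ii) $[x,y]\cdot z=x\cdot(y\cdot z)-y\cdot(x\cdot z)$; (iii) $x\cdot\{y,z\}=\{x\cdot y,z\}+\{y,x\cdot z\}$. The Heisenberg Lie algebra of dimension $2m+1$ has a basis $e_1,\dots,e_m,f_1,\dots,f_m,z$ with nonzero brackets $\{e_i,f_i\}=z$ ($1\le i\le m$). $Z(\mathfrak{n})$ is the center. A commutative post-Lie algebra structure (CPA-structure) on $\mathfrak{n}=(V,\{\,,\})$ is a bilinear product $x\circ y$ on $V$ with $x\circ y=y\circ x$, $\{x,y\}\circ z=x\circ(y\circ z)-y\circ(x\circ z)$, and $x\circ\{y,z\}=\{x\circ y,z\}+\{y,x\circ z\}$ for all $x,y,z$.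 *)

theory Defs
  imports Complex_Main
begin

definition bilinear_map :: "('k::field \<Rightarrow> 'v::ab_group_add \<Rightarrow> 'v) \<Rightarrow> ('v \<Rightarrow> 'v \<Rightarrow> 'v) \<Rightarrow> bool" where
  "bilinear_map scale p \<longleftrightarrow>
     (\<forall>x. Vector_Spaces.linear scale scale (\<lambda>y. p x y)) \<and>
     (\<forall>y. Vector_Spaces.linear scale scale (\<lambda>x. p x y))"

definition lie_algebra :: "('k::field \<Rightarrow> 'v::ab_group_add \<Rightarrow> 'v) \<Rightarrow> ('v \<Rightarrow> 'v \<Rightarrow> 'v) \<Rightarrow> bool" where
  "lie_algebra scale br \<longleftrightarrow> bilinear_map scale br \<and>
     (\<forall>x. br x x = 0) \<and>
     (\<forall>x y z. br x (br y z) + br y (br z x) + br z (br x y) = 0)"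

definition abelian_lie :: "('v::ab_group_add \<Rightarrow> 'v \<Rightarrow> 'v) \<Rightarrow> bool" where
  "abelian_lie br \<longleftrightarrow> (\<forall>x y. br x y = 0)"

definition lie_center :: "('v::ab_group_add \<Rightarrow> 'v \<Rightarrow> 'v) \<Rightarrow> 'v set" where
  "lie_center br = {z. \<forall>x. br z x = 0}"

definition heisenberg :: "('k::field \<Rightarrow> 'v::ab_group_add \<Rightarrow> 'v) \<Rightarrow> ('v \<Rightarrow> 'v \<Rightarrow> 'v) \<Rightarrow> nat \<Rightarrow> bool" where
  "heisenberg scale br m \<longleftrightarrow> lie_algebra scale br \<and>
     (\<exists>e f z. let B = e ` {..<m} \<union> f ` {..<m} \<union> {z} in
        card B = 2 * m + 1 \<and>
        \<not> Modules.module.dependent scale B \<and>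
        Modules.module.span scale B = UNIV \<and>
        (\<forall>i<m. \<forall>j<m. br (e i) (f j) = (if i = j then z else 0)) \<and>
        (\<forall>i<m. \<forall>j<m. br (e i) (e j) = 0) \<and>
        (\<forall>i<m. \<forall>j<m. br (f i) (f j) = 0) \<and>
        (\<forall>i<m. br (e i) z = 0 \<and> br (f i) z = 0))"

definition PA_structure :: "('k::field \<Rightarrow> 'v::ab_group_add \<Rightarrow> 'v) \<Rightarrow> ('v \<Rightarrow> 'v \<Rightarrow> 'v)
    \<Rightarrow> ('v \<Rightarrow> 'v \<Rightarrow> 'v) \<Rightarrow> ('v \<Rightarrow> 'v \<Rightarrow> 'v) \<Rightarrow> bool" where
  "PA_structure scale g n dot \<longleftrightarrow> bilinear_map scale dot \<and>
     (\<forall>x y. dot x y - dot y x = g x y - n x y) \<and>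
     (\<forall>x y z. dot (g x y) z = dot x (dot y z) - dot y (dot x z)) \<and>
     (\<forall>x y z. dot x (n y z) = n (dot x y) z + n y (dot x z))"

definition CPA_structure :: "('k::field \<Rightarrow> 'v::ab_group_add \<Rightarrow> 'v) \<Rightarrow> ('v \<Rightarrow> 'v \<Rightarrow> 'v)
    \<Rightarrow> ('v \<Rightarrow> 'v \<Rightarrow> 'v) \<Rightarrow> bool" where
  "CPA_structure scale n circ \<longleftrightarrow> bilinear_map scale circ \<and>
     (\<forall>x y. circ x y = circ y x) \<and>
     (\<forall>x y z. circ (n x y) z = circ x (circ y z) - circ y (circ x z)) \<and>
     (\<forall>x y z. circ x (n y z) = n (circ x y) z + n y (circ x z))"

end

theory Submission imports Defs begin

text \<open>Since \<open>\<mathfrak>g\<close> is abelian, \<open>x\<cdot>y - y\<cdot>x = -{x,y}\<close>, the left multiplications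
  commute and are derivations of \<open>\<mathfrak>n\<close>; together with the Jacobi identity this gives
  the cyclic identity \<open>a\<cdot>{y,b} + b\<cdot>{a,y} + y\<cdot>{b,a} = 0\<close>.  Applied to
  \<open>a = e\<^sub>i, y = e\<^sub>j, b = f\<^sub>j\<close> (or \<open>a = f\<^sub>i\<close>) with \<open>j \<noteq> i\<close>, which needs \<open>m \<ge> 2\<close>,
  it yields \<open>x\<cdot>z = 0\<close>, and as the centre is spanned by \<open>z\<close> it is annihilated on both
  sides.  Since \<open>\<mathfrak>n\<close> is 2-step nilpotent, all terms involving \<open>[\<mathfrak>n,\<mathfrak>n]\<close> then vanish,
  and the CPA axioms for \<open>x\<circ>y = x\<cdot>y + \<onehalf>{x,y}\<close> reduce to the commutation and
  derivation properties of the left multiplications.\<close>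

lemma bilinear_map_linear:
  assumes "bilinear_map scale p"
  shows "Vector_Spaces.linear scale scale (\<lambda>y. p x y)"
    and "Vector_Spaces.linear scale scale (\<lambda>x. p x y)"
  using assms unfolding bilinear_map_def by auto

lemma bilinear_map_simps:
  assumes "bilinear_map scale p"
  shows "p x (a + b) = p x a + p x b" "p (a + b) y = p a y + p b y"
    "p x (scale c a) = scale c (p x a)" "p (scale c a) y = scale c (p a y)"
    "p x 0 = 0" "p 0 y = 0" "p x (a - b) = p x a - p x b" "p (a - b) y = p a y - p b y"
    "p x (- a) = - p x a" "p (- a) y = - p a y"
proof -
  interpret r: module_hom scale scale "\<lambda>y. p x y"
    using bilinear_map_linear(1)[OF assms] by (simp add: linear_iff_module_hom)
  interpret l: module_hom scale scale "\<lambda>x. p x y"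
    using bilinear_map_linear(2)[OF assms] by (simp add: linear_iff_module_hom)
  show "p x (a + b) = p x a + p x b" "p (a + b) y = p a y + p b y"
    "p x (scale c a) = scale c (p x a)" "p (scale c a) y = scale c (p a y)"
    "p x 0 = 0" "p 0 y = 0" "p x (a - b) = p x a - p x b" "p (a - b) y = p a y - p b y"
    "p x (- a) = - p x a" "p (- a) y = - p a y"
    by (simp_all add: r.add l.add r.scale l.scale r.diff l.diff r.neg l.neg)
qed

lemma bilinear_map_compose_linear:
  assumes "bilinear_map scale p" and "Vector_Spaces.linear scale scale h"
  shows "bilinear_map scale (\<lambda>x y. h (p x y))"
  using Vector_Spaces.linear_compose[OF bilinear_map_linear(1)[OF assms(1)] assms(2)]
    Vector_Spaces.linear_compose[OF bilinear_map_linear(2)[OF assms(1)] assms(2)]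
  unfolding bilinear_map_def by (simp add: o_def)

lemma linear_eq_0_on_spanning:
  assumes "Vector_Spaces.linear s s h" and "module.span s B = UNIV" and "\<And>b. b \<in> B \<Longrightarrow> h b = 0"
  shows "h x = 0"
proof -
  interpret module_hom s s h using assms(1) by (simp add: linear_iff_module_hom)
  show ?thesis using eq_0_on_span[of B x] assms by auto
qed

lemma bilinear_map_eq_0_on_spanning:
  assumes "bilinear_map s p" and "module.span s B = UNIV"
    and "\<And>v w. v \<in> B \<Longrightarrow> w \<in> B \<Longrightarrow> p v w = 0"
  shows "p x y = 0"
proof -
  have "p x w = 0" if "w \<in> B" for w
    by (rule linear_eq_0_on_spanning[OF bilinear_map_linear(2)[OF assms(1)] assms(2)])
      (use assms(3) that in blast)
  then show ?thesis
    by (rule linear_eq_0_on_spanning[OF bilinear_map_linear(1)[OF assms(1)] assms(2)])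
qed

lemma lie_algebra_bilinear: "lie_algebra scale n \<Longrightarrow> bilinear_map scale n"
  unfolding lie_algebra_def by simp

lemma lie_algebra_antisym:
  assumes "lie_algebra scale n" shows "n a b = - n b a"
proof -
  have alt: "\<And>x. n x x = 0" using assms unfolding lie_algebra_def by simp
  have "0 = n (a + b) (a + b)" using alt by simp
  also have "\<dots> = n a a + n a b + n b a + n b b"
    by (simp add: bilinear_map_simps[OF lie_algebra_bilinear[OF assms]] add.assoc)
  finally show ?thesis using alt by (simp add: eq_neg_iff_add_eq_0)
qed

lemma lie_algebra_jacobi:
  "lie_algebra scale n \<Longrightarrow> n x (n y z) + n y (n z x) + n z (n x y) = 0"
  unfolding lie_algebra_def by blast

locale heisenberg_basis = vector_space scale
  for scale :: "'k::field \<Rightarrow> 'v::ab_group_add \<Rightarrow> 'v" +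
  fixes n :: "'v \<Rightarrow> 'v \<Rightarrow> 'v" and e f :: "nat \<Rightarrow> 'v" and z :: 'v and m :: nat
  assumes lie: "lie_algebra scale n"
    and independent: "\<not> dependent (e ` {..<m} \<union> f ` {..<m} \<union> {z})"
    and spanning: "span (e ` {..<m} \<union> f ` {..<m} \<union> {z}) = UNIV"
    and bracket_e_f: "\<And>i j. i < m \<Longrightarrow> j < m \<Longrightarrow> n (e i) (f j) = (if i = j then z else 0)"
    and bracket_e_e: "\<And>i j. i < m \<Longrightarrow> j < m \<Longrightarrow> n (e i) (e j) = 0"
    and bracket_f_f: "\<And>i j. i < m \<Longrightarrow> j < m \<Longrightarrow> n (f i) (f j) = 0"
    and bracket_e_z: "\<And>i. i < m \<Longrightarrow> n (e i) z = 0"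
    and bracket_f_z: "\<And>i. i < m \<Longrightarrow> n (f i) z = 0"
begin

abbreviation basis :: "'v set" where
  "basis \<equiv> e ` {..<m} \<union> f ` {..<m} \<union> {z}"

lemma basis_cases [consumes 1, case_names e f z]:
  assumes "v \<in> basis"
    and "\<And>i. i < m \<Longrightarrow> v = e i \<Longrightarrow> P" and "\<And>i. i < m \<Longrightarrow> v = f i \<Longrightarrow> P" and "v = z \<Longrightarrow> P"
  shows P
  using assms by blast

lemma z_neq_0: "z \<noteq> 0"
  using independent dependent_zero by blast

lemma bracket_antisym: "n a b = - n b a"
  by (rule lie_algebra_antisym[OF lie])

lemma bracket_basis_f:
  assumes "i < m" and "v \<in> basis"
  shows "n v (f i) = (if v = e i then z else 0)"
  using assms(2)
proof (cases rule: basis_cases)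
  case (e j)
  then show ?thesis using bracket_e_f[OF e(1) assms(1)] bracket_e_f[OF assms(1) assms(1)]
    by (cases "i = j") auto
next
  case (f j)
  then show ?thesis using bracket_f_f[OF f(1) assms(1)] bracket_e_f[OF assms(1) assms(1)] z_neq_0
    by auto
next
  case z
  then show ?thesis using bracket_f_z[OF assms(1)] bracket_antisym[of z "f i"]
      bracket_e_f[OF assms(1) assms(1)] z_neq_0
    by auto
qed

lemma bracket_basis_e:
  assumes "i < m" and "v \<in> basis"
  shows "n v (e i) = (if v = f i then - z else 0)"
  using assms(2)
proof (cases rule: basis_cases)
  case (e j)
  then show ?thesis using bracket_e_e[OF e(1) assms(1)] bracket_e_f[OF assms(1) assms(1)]
      bracket_antisym[of "f i" "e i"] z_neq_0
    by auto
next
  case (f j)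
  then show ?thesis using bracket_e_f[OF assms(1) f(1)] bracket_antisym[of "f j" "e i"]
      bracket_e_f[OF assms(1) assms(1)] z_neq_0
    by (cases "i = j") auto
next
  case z
  then show ?thesis using bracket_e_z[OF assms(1)] bracket_antisym[of z "e i"]
      bracket_e_f[OF assms(1) assms(1)] bracket_antisym[of "f i" "e i"] z_neq_0
    by auto
qed

lemma z_central: "n z w = 0"
proof (rule linear_eq_0_on_spanning[OF bilinear_map_linear(1)[OF lie_algebra_bilinear[OF lie]] spanning])
  fix v assume "v \<in> basis"
  then show "n z v = 0"
  proof (cases rule: basis_cases)
    case (e i) then show ?thesis using bracket_e_z bracket_antisym[of z "e i"] by simp
  next
    case (f i) then show ?thesis using bracket_f_z bracket_antisym[of z "f i"] by simp
  next
    case z then show ?thesis using lie unfolding lie_algebra_def by simp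
  qed
qed

lemma bracket_central: "n (n x y) w = 0"
proof (rule bilinear_map_eq_0_on_spanning[where p = "\<lambda>x y. n (n x y) w", OF _ spanning])
  show "bilinear_map scale (\<lambda>x y. n (n x y) w)"
    using bilinear_map_compose_linear[OF lie_algebra_bilinear[OF lie]
        bilinear_map_linear(2)[OF lie_algebra_bilinear[OF lie]]] by simp
next
  fix v v' assume v: "v \<in> basis" and "v' \<in> basis"
  from \<open>v' \<in> basis\<close> show "n (n v v') w = 0"
  proof (cases rule: basis_cases)
    case (e i) then show ?thesis using bracket_basis_e[OF e(1) v] z_central
        bilinear_map_simps(6,10)[OF lie_algebra_bilinear[OF lie]] by auto
  next
    case (f i) then show ?thesis using bracket_basis_f[OF f(1) v] z_central
        bilinear_map_simps(6)[OF lie_algebra_bilinear[OF lie]] by auto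
  next
    case z then show ?thesis using z_central bracket_antisym[of v z]
        bilinear_map_simps(6)[OF lie_algebra_bilinear[OF lie]] by auto
  qed
qed

lemma lie_center_eq_span_z: "lie_center n = span {z}"
proof
  show "span {z} \<subseteq> lie_center n"
    using z_central bilinear_map_simps(4)[OF lie_algebra_bilinear[OF lie]]
    by (auto simp: span_singleton lie_center_def)
next
  show "lie_center n \<subseteq> span {z}"
  proof
    fix w assume w: "w \<in> lie_center n"
    obtain u where w_sum: "w = (\<Sum>v\<in>basis. scale (u v) v)"
      using spanning span_finite[of basis] by auto
    have bracket_w: "n w y = (\<Sum>v\<in>basis. scale (u v) (n v y))" for y
    proof -
      interpret module_hom scale scale "\<lambda>x. n x y"
        using bilinear_map_linear(2)[OF lie_algebra_bilinear[OF lie]] by (simp add: linear_iff_module_hom)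
      show ?thesis unfolding w_sum sum scale ..
    qed
    have coord_e: "u (e i) = 0" if i: "i < m" for i
    proof -
      have "0 = n w (f i)" using w unfolding lie_center_def by simp
      also have "\<dots> = (\<Sum>v\<in>basis. if v = e i then scale (u v) z else 0)"
        unfolding bracket_w by (rule sum.cong) (simp_all add: bracket_basis_f[OF i])
      also have "\<dots> = scale (u (e i)) z" using i by (simp add: sum.delta)
      finally show ?thesis using z_neq_0 by simp
    qed
    have coord_f: "u (f i) = 0" if i: "i < m" for i
    proof -
      have "0 = n w (e i)" using w unfolding lie_center_def by simp
      also have "\<dots> = (\<Sum>v\<in>basis. if v = f i then scale (u v) (- z) else 0)"
        unfolding bracket_w by (rule sum.cong) (simp_all add: bracket_basis_e[OF i])
      also have "\<dots> = scale (u (f i)) (- z)" using i by (simp add: sum.delta)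
      finally show ?thesis using z_neq_0 by simp
    qed
    have "w = (\<Sum>v\<in>basis. if v = z then scale (u z) z else 0)"
      unfolding w_sum by (rule sum.cong) (auto simp: coord_e coord_f)
    also have "\<dots> = scale (u z) z" by (simp add: sum.delta)
    finally show "w \<in> span {z}" by (auto simp: span_singleton)
  qed
qed

end

lemma heisenberg_obtain_basis:
  assumes "vector_space scale" and "heisenberg scale n m"
  obtains e f z where "heisenberg_basis scale n e f z m"
proof -
  interpret vector_space scale by fact
  from assms(2) obtain e f z where
    "lie_algebra scale n" "\<not> dependent (e ` {..<m} \<union> f ` {..<m} \<union> {z})"
    "span (e ` {..<m} \<union> f ` {..<m} \<union> {z}) = UNIV"
    "\<forall>i<m. \<forall>j<m. n (e i) (f j) = (if i = j then z else 0)"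
    "\<forall>i<m. \<forall>j<m. n (e i) (e j) = 0" "\<forall>i<m. \<forall>j<m. n (f i) (f j) = 0"
    "\<forall>i<m. n (e i) z = 0 \<and> n (f i) z = 0"
    unfolding heisenberg_def Let_def by blast
  then have "heisenberg_basis scale n e f z m"
    by unfold_locales blast+
  then show ?thesis by (rule that)
qed

locale abelian_PA =
  fixes scale :: "'k::field \<Rightarrow> 'v::ab_group_add \<Rightarrow> 'v" and g n dot :: "'v \<Rightarrow> 'v \<Rightarrow> 'v"
  assumes PA: "PA_structure scale g n dot"
    and g_abelian: "abelian_lie g"
    and n_lie: "lie_algebra scale n"
begin

lemma dot_bilinear: "bilinear_map scale dot"
  using PA unfolding PA_structure_def by simp

lemma dot_commutator: "dot x y - dot y x = - n x y"
  using PA g_abelian unfolding PA_structure_def abelian_lie_def by simp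

lemma dot_swap: "dot x y = dot y x + n y x"
  using dot_commutator[of y x] by (simp add: algebra_simps)

lemma dot_left_commute: "dot x (dot y c) = dot y (dot x c)"
proof -
  have "dot (g x y) c = dot x (dot y c) - dot y (dot x c)"
    using PA unfolding PA_structure_def by blast
  then show ?thesis
    using g_abelian bilinear_map_simps(6)[OF dot_bilinear] unfolding abelian_lie_def by simp
qed

lemma dot_derivation: "dot x (n y c) = n (dot x y) c + n y (dot x c)"
  using PA unfolding PA_structure_def by blast

lemma dot_cyclic: "dot a (n y b) + dot b (n a y) + dot y (n b a) = 0"
proof -
  note n_bil = lie_algebra_bilinear[OF n_lie] and n_antisym = lie_algebra_antisym[OF n_lie]
  have derivation': "dot a (n y b) = n (dot a y) b - n (dot a b) y" for a y b
    using dot_derivation[of a y b] n_antisym[of y "dot a b"] by simp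
  have "dot a (n y b) + dot b (n a y) + dot y (n b a)
     = n (dot a y - dot y a) b + n (dot b a - dot a b) y + n (dot y b - dot b y) a"
    unfolding derivation' bilinear_map_simps(8)[OF n_bil] by (simp add: algebra_simps)
  also have "\<dots> = - (n (n a y) b + n (n b a) y + n (n y b) a)"
    unfolding dot_commutator bilinear_map_simps(10)[OF n_bil] by simp
  also have "\<dots> = n b (n a y) + n y (n b a) + n a (n y b)"
    using n_antisym[of "n a y" b] n_antisym[of "n b a" y] n_antisym[of "n y b" a] by simp
  also have "\<dots> = 0"
    using lie_algebra_jacobi[OF n_lie, of b a y] by (simp add: algebra_simps)
  finally show ?thesis .
qed

lemma CPA_symmetrization:
  assumes "vector_space scale" and "(2::'k) \<noteq> 0"
    and n_nilpotent: "\<And>x y c. n (n x y) c = 0"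
    and dot_right: "\<And>x y c. dot x (n y c) = 0"
  shows "CPA_structure scale n (\<lambda>x y. scale (1/2) (dot x y + dot y x))"
proof -
  interpret vs: vector_space scale by fact
  note n_bil = lie_algebra_bilinear[OF n_lie]
  define circ where "circ x y = scale (1/2) (dot x y + dot y x)" for x y
  have circ_eq: "circ x y = dot x y + scale (1/2) (n x y)" for x y
  proof -
    have "scale (1/2) v + scale (1/2) v = v" for v
      using vs.scale_left_distrib[of "1/2" "1/2" v, symmetric] assms(2)
      by (simp add: field_simps)
    then show ?thesis
      unfolding circ_def dot_swap[of y x] by (simp add: vs.scale_right_distrib algebra_simps)
  qed
  have bracket_nn: "n x (n y c) = 0" for x y c
    using n_nilpotent lie_algebra_antisym[OF n_lie, of x "n y c"] by simp
  have dot_left: "dot (n x y) c = 0" for x y c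
    using dot_swap[of "n x y" c] dot_right bracket_nn by simp
  have circ_bilinear: "bilinear_map scale circ"
    unfolding bilinear_map_def circ_def
    by (intro conjI allI iffD2[OF Vector_Spaces.linear_iff])
      (use assms(1) in \<open>simp_all add: bilinear_map_simps[OF dot_bilinear]
        vs.scale_right_distrib algebra_simps\<close>)
  have bracket_dot_swap: "n (dot y x) c = n (dot x y) c" for x y c
    unfolding dot_swap[of y x] using n_nilpotent by (simp add: bilinear_map_simps(2)[OF n_bil])
  have circ_nested: "circ x (circ y c) = dot x (dot y c) - scale (1/2) (n (dot x y) c)" for x y c
  proof -
    have "n x (dot y c) = - n (dot x y) c"
      using dot_derivation[of y x c] dot_right bracket_dot_swap[of x y c]
      by (simp add: eq_neg_iff_add_eq_0 add.commute)
    then show ?thesis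
      unfolding circ_eq using dot_right bracket_nn
      by (simp add: bilinear_map_simps[OF dot_bilinear] bilinear_map_simps[OF n_bil])
  qed
  have "circ (n x y) c = circ x (circ y c) - circ y (circ x c)" for x y c
    unfolding circ_nested
    using dot_left dot_right dot_left_commute[of x y c] bracket_dot_swap[of x y c]
    by (simp add: circ_def)
  moreover have "circ x (n y c) = n (circ x y) c + n y (circ x c)" for x y c
  proof -
    have "n (circ x y) c + n y (circ x c) = n (dot x y) c + n y (dot x c)"
      unfolding circ_eq using n_nilpotent bracket_nn
      by (simp add: bilinear_map_simps[OF n_bil])
    then show ?thesis using dot_derivation[of x y c] dot_right dot_left by (simp add: circ_def)
  qed
  ultimately show ?thesis
    using circ_bilinear unfolding CPA_structure_def circ_def by (auto simp: add.commute)
qed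

end

locale abelian_PA_heisenberg =
  abelian_PA scale g n dot + heisenberg_basis scale n e f z m
  for scale :: "'k::field \<Rightarrow> 'v::ab_group_add \<Rightarrow> 'v" and g n dot e f z m +
  assumes two_le_m: "2 \<le> m"
begin

lemma other_index: "\<exists>j<m. j \<noteq> i"
  by (rule exI[of _ "if i = 0 then 1 else 0"]) (use two_le_m in auto)

lemma dot_basis_z:
  assumes "v \<in> basis" shows "dot v z = 0"
  using assms
proof (cases rule: basis_cases)
  case (e i)
  obtain j where j: "j < m" "j \<noteq> i" using other_index by blast
  have "dot (e i) (n (e j) (f j)) + dot (f j) (n (e i) (e j)) + dot (e j) (n (f j) (e i)) = 0"
    by (rule dot_cyclic)
  then show ?thesis
    using e j bracket_e_f[OF j(1) j(1)] bracket_e_e[OF e(1) j(1)] bracket_e_f[OF e(1) j(1)]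
      bracket_antisym[of "f j" "e i"]
      bilinear_map_simps(5)[OF dot_bilinear] by auto
next
  case (f i)
  obtain j where j: "j < m" "j \<noteq> i" using other_index by blast
  have "dot (f i) (n (e j) (f j)) + dot (f j) (n (f i) (e j)) + dot (e j) (n (f j) (f i)) = 0"
    by (rule dot_cyclic)
  then show ?thesis
    using f j bracket_e_f[OF j(1) j(1)] bracket_f_f[OF j(1) f(1)] bracket_e_f[OF j(1) f(1)]
      bracket_antisym[of "f i" "e j"]
      bilinear_map_simps(5)[OF dot_bilinear] by auto
next
  case z
  have "0 < m" using two_le_m by simp
  have "dot z (n (e 0) (f 0)) + dot (f 0) (n z (e 0)) + dot (e 0) (n (f 0) z) = 0"
    by (rule dot_cyclic)
  then show ?thesis
    using z \<open>0 < m\<close> bracket_e_f z_central bracket_f_z bilinear_map_simps(5)[OF dot_bilinear] by auto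
qed

lemma dot_z: "dot x z = 0"
  by (rule linear_eq_0_on_spanning[OF bilinear_map_linear(2)[OF dot_bilinear] spanning])
    (rule dot_basis_z)

lemma dot_lie_center:
  assumes "w \<in> lie_center n" shows "dot x w = 0" and "dot w x = 0"
proof -
  obtain c where "w = scale c z"
    using assms by (auto simp: lie_center_eq_span_z span_singleton)
  then show "dot x w = 0" using dot_z by (simp add: bilinear_map_simps(3)[OF dot_bilinear])
  moreover have "n x w = 0"
    using assms bracket_antisym[of x w] unfolding lie_center_def by simp
  ultimately show "dot w x = 0" using dot_swap[of w x] by simp
qed

end

theorem proposition4p11:
  fixes scale :: "'k::field_char_0 \<Rightarrow> 'v::ab_group_add \<Rightarrow> 'v"
    and g n dot :: "'v \<Rightarrow> 'v \<Rightarrow> 'v"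
    and m :: nat
  assumes "vector_space scale"
    and "lie_algebra scale g" and "abelian_lie g"
    and "heisenberg scale n m" and "2 * m + 1 \<ge> 5"
    and "PA_structure scale g n dot"
  shows "(\<forall>z \<in> lie_center n. \<forall>x. dot z x = 0 \<and> dot x z = 0) \<and>
         CPA_structure scale n (\<lambda>x y. scale (1/2) (dot x y + dot y x))"
proof -
  obtain e f z where "heisenberg_basis scale n e f z m"
    using heisenberg_obtain_basis[OF assms(1,4)] .
  then interpret abelian_PA_heisenberg scale g n dot e f z m
    using assms(3,5,6) by (simp add: abelian_PA_heisenberg_def abelian_PA_heisenberg_axioms_def
        abelian_PA_def heisenberg_basis.lie)
  have bracket_center: "n x y \<in> lie_center n" for x y
    using bracket_central unfolding lie_center_def by simp
  have "CPA_structure scale n (\<lambda>x y. scale (1/2) (dot x y + dot y x))"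
    by (rule CPA_symmetrization[OF assms(1)])
      (simp_all add: bracket_central dot_lie_center bracket_center)
  then show ?thesis using dot_lie_center by blast
qed

end
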